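(* A homogeneous Poisson point process $\Phi$ on $\mathbb{R}^d$ almost surely contains no second-order descending chain.
   Context: A second-order descending chain in a point process $N$ is an infinite sequence $(x_n)_{n\ge0}$ of pairwise distinct points of $N$ such that $d_i<\max(d_{i-1},d_{i-2})$ for all $i\ge 2$, where $d_i=\|x_{i+1}-x_i\|$. *)

theory Defs
  imports "HOL-Probability.Probability"
begin

text \<open>Points of the process live in a Euclidean space 'a (playing the role of R^d, with
  the Euclidean norm). A (simple) point process is modelled as a random locally finite
  set of points  Phi :: 'w => 'a set  on a probability space M.\<close>

definition homogeneous_PPP :: "'w measure \<Rightarrow> real \<Rightarrow> ('w \<Rightarrow> 'a::euclidean_space set) \<Rightarrow> bool" where
  "homogeneous_PPP M lam Phi \<longleftrightarrow>
     prob_space M \<and> lam > 0 \<and>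
     (\<forall>\<omega>\<in>space M. \<forall>B. bounded B \<longrightarrow> finite (Phi \<omega> \<inter> B)) \<and>
     (\<forall>B. B \<in> sets lborel \<and> bounded B \<longrightarrow>
        (\<lambda>\<omega>. card (Phi \<omega> \<inter> B)) \<in> measurable M (count_space UNIV) \<and>
        (\<forall>k::nat. measure M {\<omega>\<in>space M. card (Phi \<omega> \<inter> B) = k} =
            (lam * measure lborel B) ^ k / fact k * exp (- (lam * measure lborel B)))) \<and>
     (\<forall>(I::nat set) (B::nat \<Rightarrow> 'a set). finite I \<and> (\<forall>i\<in>I. B i \<in> sets lborel \<and> bounded (B i))
        \<and> disjoint_family_on B I \<longrightarrow>
        prob_space.indep_vars M (\<lambda>_. count_space UNIV) (\<lambda>i \<omega>. card (Phi \<omega> \<inter> B i)) I)"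

definition second_order_descending_chain :: "'a::real_normed_vector set \<Rightarrow> (nat \<Rightarrow> 'a) \<Rightarrow> bool" where
  "second_order_descending_chain N x \<longleftrightarrow>
     inj x \<and> (\<forall>n. x n \<in> N) \<and>
     (\<forall>i\<ge>2. norm (x (Suc i) - x i) <
             max (norm (x i - x (i - 1))) (norm (x (i - 1) - x (i - 2))))"

end

(*
  Discretise space into cubes of side \<delta>. Grouping the jumps d_i = |x_(i+1) - x_i| of a
  second-order descending chain in consecutive pairs, the pair maxima strictly decrease. For a
  chain starting in a fixed ball whose first pair maximum is at most R, put h = R / (k + 1): the
  levels of the first k pair maxima in steps of h form an antitone sequence, and there are at
  most (2k + 1)^k / k! of those. Either two of the first 2k + 1 points share a cube, which has
  probability O(\<delta>^n), or the visited cubes form a path of distinct cubes whose pair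
  increments lie in thin windows prescribed by the levels. A window has O(\<delta>^(-2n) / k)
  elements while a fixed path of 2k + 1 distinct cubes is fully occupied with probability
  (\<lambda> \<delta>^n)^(2k+1), so all such paths together have probability O(c^k / k!). Letting
  first k grow and then \<delta> shrink, the chains are confined to events of arbitrarily small
  probability; a countable union over the bounds finishes the proof.
*)

theory Submission
  imports Defs
begin

section \<open>Cubic grids\<close>

definition grid :: "real \<Rightarrow> 'a::euclidean_space set" where
  "grid \<delta> = {p. \<forall>b\<in>Basis. p \<bullet> b / \<delta> \<in> \<int>}"

definition cell_corner :: "real \<Rightarrow> 'a::euclidean_space \<Rightarrow> 'a" where
  "cell_corner \<delta> x = (\<Sum>b\<in>Basis. (\<delta> * of_int \<lfloor>x \<bullet> b / \<delta>\<rfloor>) *\<^sub>R b)"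

definition cell :: "real \<Rightarrow> 'a::euclidean_space \<Rightarrow> 'a set" where
  "cell \<delta> p = {x. cell_corner \<delta> x = p}"

lemma inner_cell_corner: "b \<in> Basis \<Longrightarrow> cell_corner \<delta> x \<bullet> b = \<delta> * of_int \<lfloor>x \<bullet> b / \<delta>\<rfloor>"
  unfolding cell_corner_def by (simp add: inner_sum_left inner_Basis if_distrib sum.delta cong: if_cong)

lemma cell_corner_in_grid: "\<delta> > 0 \<Longrightarrow> cell_corner \<delta> x \<in> grid \<delta>"
  unfolding grid_def by (simp add: inner_cell_corner)

lemma grid_diff: "p \<in> grid \<delta> \<Longrightarrow> q \<in> grid \<delta> \<Longrightarrow> p - q \<in> grid \<delta>"
  unfolding grid_def by (simp add: inner_diff_left diff_divide_distrib Ints_diff)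

lemma floor_divide_bounds:
  fixes \<delta> y :: real
  assumes "\<delta> > 0"
  shows "\<delta> * of_int \<lfloor>y / \<delta>\<rfloor> \<le> y" "y < \<delta> * of_int \<lfloor>y / \<delta>\<rfloor> + \<delta>"
proof -
  have "\<delta> * of_int \<lfloor>y / \<delta>\<rfloor> \<le> \<delta> * (y / \<delta>)"
    using assms by (intro mult_left_mono) auto
  then show "\<delta> * of_int \<lfloor>y / \<delta>\<rfloor> \<le> y" using assms by simp
  have "\<delta> * (y / \<delta>) < \<delta> * (of_int \<lfloor>y / \<delta>\<rfloor> + 1)"
    using assms by (intro mult_strict_left_mono) auto
  then show "y < \<delta> * of_int \<lfloor>y / \<delta>\<rfloor> + \<delta>" using assms by (simp add: algebra_simps)
qed

lemma norm_le_DIM_mult: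
  fixes x :: "'a::euclidean_space" and e :: real
  assumes "\<And>b. b \<in> Basis \<Longrightarrow> \<bar>x \<bullet> b\<bar> \<le> e"
  shows "norm x \<le> DIM('a) * e"
proof -
  have "norm x \<le> (\<Sum>b\<in>Basis. \<bar>x \<bullet> b\<bar>)" by (rule norm_le_l1)
  also have "\<dots> \<le> (\<Sum>b\<in>(Basis::'a set). e)" by (rule sum_mono) (rule assms)
  finally show ?thesis by simp
qed

lemma norm_diff_cell_corner:
  fixes x :: "'a::euclidean_space" and \<delta> :: real
  assumes "\<delta> > 0"
  shows "norm (x - cell_corner \<delta> x) \<le> DIM('a) * \<delta>"
proof (rule norm_le_DIM_mult)
  fix b :: 'a assume "b \<in> Basis"
  then show "\<bar>(x - cell_corner \<delta> x) \<bullet> b\<bar> \<le> \<delta>"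
    using floor_divide_bounds[OF assms, of "x \<bullet> b"] by (simp add: inner_diff_left inner_cell_corner)
qed

lemma norm_cell_corner_le:
  fixes x :: "'a::euclidean_space" and \<delta> :: real
  assumes "\<delta> > 0"
  shows "norm (cell_corner \<delta> x) \<le> norm x + DIM('a) * \<delta>"
  using norm_triangle_sub[of "cell_corner \<delta> x" x] norm_diff_cell_corner[OF assms, of x]
  by (simp add: norm_minus_commute)

lemma norm_diff_cell_corners:
  fixes x y :: "'a::euclidean_space" and \<delta> :: real
  assumes "\<delta> > 0"
  shows "\<bar>norm (cell_corner \<delta> y - cell_corner \<delta> x) - norm (y - x)\<bar> \<le> 2 * DIM('a) * \<delta>"
proof -
  have "\<bar>norm (cell_corner \<delta> y - cell_corner \<delta> x) - norm (y - x)\<bar> \<le>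
        norm ((x - cell_corner \<delta> x) - (y - cell_corner \<delta> y))"
    using norm_triangle_ineq3[of "cell_corner \<delta> y - cell_corner \<delta> x" "y - x"]
    by (simp add: algebra_simps)
  also have "\<dots> \<le> norm (x - cell_corner \<delta> x) + norm (y - cell_corner \<delta> y)"
    by (rule norm_triangle_ineq4)
  also have "\<dots> \<le> 2 * DIM('a) * \<delta>"
    using norm_diff_cell_corner[OF assms, of x] norm_diff_cell_corner[OF assms, of y] by simp
  finally show ?thesis .
qed

lemma cell_subset_cbox:
  assumes "\<delta> > 0"
  shows "cell \<delta> p \<subseteq> cbox p (p + \<delta> *\<^sub>R One)"
proof
  fix x assume "x \<in> cell \<delta> p"
  then have corner: "cell_corner \<delta> x = p" by (simp add: cell_def)
  show "x \<in> cbox p (p + \<delta> *\<^sub>R One)"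
    unfolding mem_box
  proof (intro ballI conjI)
    fix b :: 'a assume b: "b \<in> Basis"
    have "p \<bullet> b = \<delta> * of_int \<lfloor>x \<bullet> b / \<delta>\<rfloor>" using corner b by (auto simp: inner_cell_corner)
    with floor_divide_bounds[OF assms, of "x \<bullet> b"] b
    show "p \<bullet> b \<le> x \<bullet> b" "x \<bullet> b \<le> (p + \<delta> *\<^sub>R One) \<bullet> b"
      by (simp_all add: inner_add_left)
  qed
qed

lemma box_subset_cell:
  assumes "\<delta> > 0" "p \<in> grid \<delta>"
  shows "box p (p + \<delta> *\<^sub>R One) \<subseteq> cell \<delta> p"
proof
  fix y assume y: "y \<in> box p (p + \<delta> *\<^sub>R One)"
  have "cell_corner \<delta> y \<bullet> b = p \<bullet> b" if b: "b \<in> Basis" for b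
  proof -
    obtain m where "p \<bullet> b / \<delta> = of_int m"
      using assms(2) b unfolding grid_def by (blast elim: Ints_cases)
    then have m: "p \<bullet> b = \<delta> * of_int m" using assms(1) by (simp add: divide_eq_eq mult.commute)
    have "p \<bullet> b < y \<bullet> b" "y \<bullet> b < p \<bullet> b + \<delta>"
      using y b by (auto simp: mem_box inner_add_left)
    then have "of_int m < y \<bullet> b / \<delta>" "y \<bullet> b / \<delta> < of_int m + 1"
      using m assms(1) by (simp_all add: pos_less_divide_eq pos_divide_less_eq algebra_simps)
    then have "\<lfloor>y \<bullet> b / \<delta>\<rfloor> = m" by (intro floor_unique) auto
    with m b show ?thesis by (simp add: inner_cell_corner)
  qed
  then have "cell_corner \<delta> y = p" by (rule euclidean_eqI)
  then show "y \<in> cell \<delta> p" by (simp add: cell_def)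
qed

lemma cell_corner_borel: "cell_corner \<delta> \<in> borel_measurable (borel :: 'a::euclidean_space measure)"
  unfolding cell_corner_def by measurable

lemma sets_cell: "cell \<delta> p \<in> sets (lborel :: 'a::euclidean_space measure)"
proof -
  have "cell \<delta> p = cell_corner \<delta> -` {p} \<inter> space borel" by (auto simp: cell_def)
  also have "\<dots> \<in> sets borel" by (rule measurable_sets[OF cell_corner_borel]) simp
  finally show ?thesis by simp
qed

lemma bounded_cell: "\<delta> > 0 \<Longrightarrow> bounded (cell \<delta> p)"
  using bounded_subset[OF bounded_cbox cell_subset_cbox] by blast

lemma measure_cell_le:
  fixes p :: "'a::euclidean_space"
  assumes "\<delta> > 0"
  shows "measure lborel (cell \<delta> p) \<le> \<delta> ^ DIM('a)"
proof -
  have "measure lborel (cell \<delta> p) \<le> measure lborel (cbox p (p + \<delta> *\<^sub>R One))"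
    by (rule measure_mono_fmeasurable[OF cell_subset_cbox[OF assms] sets_cell]) simp
  also have "\<dots> = \<delta> ^ DIM('a)"
    using assms by (simp add: inner_add_left prod_constant)
  finally show ?thesis .
qed

section \<open>Counting grid points in shells\<close>

lemma card_grid_le_measure:
  fixes F :: "'a::euclidean_space set" and \<delta> :: real
  assumes "\<delta> > 0" "finite F" "F \<subseteq> grid \<delta>" "S \<in> fmeasurable lborel"
    and "\<And>p. p \<in> F \<Longrightarrow> box p (p + \<delta> *\<^sub>R One) \<subseteq> S"
  shows "card F * \<delta> ^ DIM('a) \<le> measure lborel S"
proof -
  let ?box = "\<lambda>p::'a. box p (p + \<delta> *\<^sub>R One)"
  have "disjoint_family_on ?box F"
    unfolding disjoint_family_on_def
  proof (intro ballI impI)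
    fix p q assume "p \<in> F" "q \<in> F" "p \<noteq> q"
    then have "?box p \<subseteq> cell \<delta> p" "?box q \<subseteq> cell \<delta> q" "cell \<delta> p \<inter> cell \<delta> q = {}"
      using box_subset_cell[OF assms(1)] assms(3) by (auto simp: cell_def)
    then show "?box p \<inter> ?box q = {}" by blast
  qed
  moreover have "emeasure lborel (?box p) \<noteq> \<infinity>" for p
    using emeasure_bounded_finite[of "?box p"] by simp
  ultimately have "measure lborel (\<Union>p\<in>F. ?box p) = (\<Sum>p\<in>F. measure lborel (?box p))"
    using assms(2) by (intro measure_finite_Union) auto
  also have "\<dots> = card F * \<delta> ^ DIM('a)"
    using assms(1) by (simp add: inner_add_left prod_constant)
  finally have "measure lborel (\<Union>p\<in>F. ?box p) = card F * \<delta> ^ DIM('a)" .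
  moreover have "measure lborel (\<Union>p\<in>F. ?box p) \<le> measure lborel S"
    using assms(2,4,5) by (intro measure_mono_fmeasurable) auto
  ultimately show ?thesis by simp
qed

lemma measure_cball_diff_ball:
  assumes "0 \<le> A" "A \<le> B"
  shows "measure lborel (cball (0::'a::euclidean_space) B - ball 0 A) =
    measure lborel (ball (0::'a) 1) * (B ^ DIM('a) - A ^ DIM('a))"
proof -
  have "measure lborel (cball (0::'a) B - ball 0 A) = measure lborel (cball (0::'a) B) - measure lborel (ball (0::'a) A)"
    using assms emeasure_bounded_finite[of "cball (0::'a) B"] by (intro measure_Diff) auto
  then show ?thesis
    using assms content_ball_conv_unit_ball[of A "0::'a"] content_ball_conv_unit_ball[of B "0::'a"]
      content_cball_conv_ball[of "0::'a" B]
    by (simp add: algebra_simps)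
qed

definition grid_shell :: "real \<Rightarrow> real \<Rightarrow> real \<Rightarrow> 'a::euclidean_space set" where
  "grid_shell \<delta> a b = {p \<in> grid \<delta>. a \<le> norm p \<and> norm p \<le> b}"

lemma finite_card_grid_shell:
  fixes \<delta> a b :: real
  assumes "\<delta> > 0" "0 \<le> b" "a \<le> b"
  defines "n \<equiv> DIM('a::euclidean_space)"
  shows "finite (grid_shell \<delta> a b :: 'a set)"
    and "card (grid_shell \<delta> a b :: 'a set) * \<delta> ^ n \<le>
      measure lborel (ball (0::'a) 1) * ((b + n * \<delta>) ^ n - (max 0 (a - n * \<delta>)) ^ n)"
proof -
  define A where "A = max 0 (a - n * \<delta>)"
  define B where "B = b + n * \<delta>"
  define V where "V = measure lborel (ball (0::'a) 1) * (B ^ n - A ^ n)"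
  have "0 \<le> n * \<delta>" using assms(1) by simp
  then have AB: "0 \<le> A" "A \<le> B" using assms(2,3) by (auto simp: A_def B_def algebra_simps)
  have bound: "card F * \<delta> ^ n \<le> V" if F: "F \<subseteq> grid_shell \<delta> a b" "finite F" for F :: "'a set"
  proof -
    have "card F * \<delta> ^ n \<le> measure lborel (cball (0::'a) B - ball 0 A)"
      unfolding n_def
    proof (rule card_grid_le_measure[OF assms(1) F(2)])
      show "F \<subseteq> grid \<delta>" using F by (auto simp: grid_shell_def)
      show "cball 0 B - ball 0 A \<in> fmeasurable lborel"
        by (rule fmeasurableI2[OF fmeasurable_compact[of "cball 0 B"]]) auto
      fix p assume "p \<in> F"
      then have p: "p \<in> grid \<delta>" "a \<le> norm p" "norm p \<le> b" using F by (auto simp: grid_shell_def)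
      show "box p (p + \<delta> *\<^sub>R One) \<subseteq> cball 0 B - ball 0 A"
      proof
        fix y assume "y \<in> box p (p + \<delta> *\<^sub>R One)"
        then have "cell_corner \<delta> y = p" using box_subset_cell[OF assms(1) p(1)] by (auto simp: cell_def)
        then have "norm (y - p) \<le> n * \<delta>" using norm_diff_cell_corner[OF assms(1), of y] by (simp add: n_def)
        then have "norm y \<le> B" "A \<le> norm y"
          using norm_triangle_sub[of y p] norm_triangle_sub[of p y] p assms(1)
          by (auto simp: A_def B_def norm_minus_commute)
        then show "y \<in> cball 0 B - ball 0 A" by auto
      qed
    qed
    then show ?thesis using measure_cball_diff_ball[OF AB, where 'a='a] by (simp add: V_def n_def)
  qed
  have "finite (grid_shell \<delta> a b :: 'a set) \<and> card (grid_shell \<delta> a b :: 'a set) \<le> nat \<lceil>V / \<delta> ^ n\<rceil>"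
  proof (rule finite_if_finite_subsets_card_bdd)
    fix F :: "'a set" assume "F \<subseteq> grid_shell \<delta> a b" "finite F"
    then have "card F \<le> V / \<delta> ^ n" using bound assms(1) by (simp add: pos_le_divide_eq)
    then show "card F \<le> nat \<lceil>V / \<delta> ^ n\<rceil>" by linarith
  qed
  then show "finite (grid_shell \<delta> a b :: 'a set)" ..
  then show "card (grid_shell \<delta> a b :: 'a set) * \<delta> ^ n \<le>
      measure lborel (ball (0::'a) 1) * ((b + n * \<delta>) ^ n - (max 0 (a - n * \<delta>)) ^ n)"
    using bound by (simp add: V_def A_def B_def)
qed

lemma power_diff_le:
  fixes A B :: "'a::linordered_idom"
  assumes "0 \<le> A" "A \<le> B"
  shows "B ^ n - A ^ n \<le> of_nat n * B ^ (n - 1) * (B - A)"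
proof (induction n)
  case 0 then show ?case by simp
next
  case (Suc n)
  have "B ^ Suc n - A ^ Suc n = B * (B ^ n - A ^ n) + A ^ n * (B - A)" by (simp add: algebra_simps)
  also have "\<dots> \<le> B * (of_nat n * B ^ (n - 1) * (B - A)) + B ^ n * (B - A)"
    using Suc.IH assms by (intro add_mono mult_left_mono mult_right_mono power_mono) auto
  also have "\<dots> = of_nat (Suc n) * B ^ n * (B - A)"
    by (cases n) (simp_all add: algebra_simps)
  finally show ?case by simp
qed

lemma card_grid_ball_le:
  fixes \<delta> \<rho> :: real
  assumes "\<delta> > 0" "0 \<le> \<rho>"
  shows "card (grid_shell \<delta> 0 \<rho> :: 'a::euclidean_space set) * \<delta> ^ DIM('a) \<le>
    measure lborel (ball (0::'a) 1) * (\<rho> + DIM('a) * \<delta>) ^ DIM('a)"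
  using finite_card_grid_shell(2)[OF assms assms(2), where 'a='a] assms(1)
  by (simp add: zero_power[OF DIM_positive])

lemma card_grid_shell_le:
  fixes \<delta> a b :: real
  assumes "\<delta> > 0" "0 \<le> b" "a \<le> b"
  defines "n \<equiv> DIM('a::euclidean_space)"
  shows "card (grid_shell \<delta> a b :: 'a set) * \<delta> ^ n \<le>
    measure lborel (ball (0::'a) 1) * n * (b + n * \<delta>) ^ (n - 1) * (b - a + 2 * n * \<delta>)"
proof -
  define A where "A = max 0 (a - n * \<delta>)"
  define B where "B = b + n * \<delta>"
  have "0 \<le> n * \<delta>" using assms(1) by simp
  then have AB: "0 \<le> A" "A \<le> B" "B - A \<le> b - a + 2 * n * \<delta>"
    using assms(2,3) by (auto simp: A_def B_def max_def algebra_simps)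
  have "card (grid_shell \<delta> a b :: 'a set) * \<delta> ^ n \<le> measure lborel (ball (0::'a) 1) * (B ^ n - A ^ n)"
    using finite_card_grid_shell(2)[OF assms(1-3)] by (simp add: n_def A_def B_def)
  also have "\<dots> \<le> measure lborel (ball (0::'a) 1) * (n * B ^ (n - 1) * (b - a + 2 * n * \<delta>))"
    using power_diff_le[OF AB(1,2), of n] AB zero_le_power[of B "n - 1"]
    by (intro mult_left_mono order.trans[OF _ mult_left_mono[OF AB(3)]]) auto
  finally show ?thesis by (simp add: B_def mult_ac)
qed

section \<open>Antitone level sequences\<close>

definition antitone_levels :: "nat \<Rightarrow> nat \<Rightarrow> (nat \<Rightarrow> nat) set" where
  "antitone_levels k H = {l \<in> {..<k} \<rightarrow>\<^sub>E {..H}. \<forall>i j. i \<le> j \<longrightarrow> j < k \<longrightarrow> l j \<le> l i}"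

lemma finite_antitone_levels: "finite (antitone_levels k H)"
  by (rule finite_subset[of _ "{..<k} \<rightarrow>\<^sub>E {..H}"]) (auto simp: antitone_levels_def intro: finite_PiE)

lemma sorted_rev_antitone_level:
  assumes "l \<in> antitone_levels k H"
  shows "sorted (rev (map l [0..<k]))"
  unfolding sorted_iff_nth_mono
proof (intro allI impI)
  fix i j assume ij: "i \<le> j" "j < length (rev (map l [0..<k]))"
  then have "l (k - 1 - i) \<le> l (k - 1 - j)"
    using assms unfolding antitone_levels_def by auto
  with ij show "rev (map l [0..<k]) ! i \<le> rev (map l [0..<k]) ! j" by (simp add: rev_nth)
qed

text \<open>An antitone sequence is determined by its multiset of values.\<close>

lemma card_antitone_levels_le: "real (card (antitone_levels k H)) \<le> real ((H + k) ^ k) / fact k"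
proof -
  define f where "f l = mset (map l [0..<k])" for l :: "nat \<Rightarrow> nat"
  have "inj_on f (antitone_levels k H)"
  proof (rule inj_onI)
    fix l l' assume l: "l \<in> antitone_levels k H" "l' \<in> antitone_levels k H" and "f l = f l'"
    then have "mset (rev (map l [0..<k])) = mset (rev (map l' [0..<k]))" by (simp add: f_def)
    then have "rev (map l [0..<k]) = rev (map l' [0..<k])"
      using sorted_rev_antitone_level[OF l(1)] sorted_rev_antitone_level[OF l(2)]
      by (metis properties_for_sort sorted_sort_id)
    then have "l i = l' i" if "i < k" for i
      using that by (metis add_0 diff_zero nth_map_upt rev_is_rev_conv)
    with l show "l = l'" unfolding antitone_levels_def by (intro PiE_ext[of l "{..<k}" "\<lambda>_. {..H}"]) auto
  qed
  moreover have "f ` antitone_levels k H \<subseteq> multisets_of_size {..H} k"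
    unfolding multisets_of_size_def f_def antitone_levels_def by (auto simp: PiE_iff)
  ultimately have "card (antitone_levels k H) \<le> card (multisets_of_size {..H} k)"
    by (metis card_image card_mono finite_atMost finite_multisets_of_size)
  also have "\<dots> = (H + k) choose k" by (simp add: card_multisets_of_size)
  finally have "real (card (antitone_levels k H)) * fact k \<le> real (((H + k) choose k) * fact k)"
    by (simp add: mult_right_mono)
  also have "\<dots> \<le> real ((H + k) ^ k)" by (subst of_nat_le_iff) (rule binomial_fact_pow)
  finally show ?thesis by (simp add: field_simps)
qed

section \<open>Jumps of a second-order descending chain\<close>

definition jump :: "(nat \<Rightarrow> 'a::real_normed_vector) \<Rightarrow> nat \<Rightarrow> real" where
  "jump x i = norm (x (Suc i) - x i)"

definition pair_jump :: "(nat \<Rightarrow> 'a::real_normed_vector) \<Rightarrow> nat \<Rightarrow> real" where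
  "pair_jump x j = max (jump x (2 * j)) (jump x (2 * j + 1))"

lemma pair_jump_nonneg: "0 \<le> pair_jump x j"
  by (simp add: pair_jump_def jump_def le_max_iff_disj)

lemma descending_chain_jump_less:
  assumes "second_order_descending_chain N x" "i \<ge> 2"
  shows "jump x i < max (jump x (i - 1)) (jump x (i - 2))"
proof -
  have "Suc (i - 1) = i" "Suc (i - 2) = i - 1" using assms(2) by auto
  with assms show ?thesis unfolding second_order_descending_chain_def jump_def by metis
qed

lemma descending_chain_pair_jump_less:
  assumes "second_order_descending_chain N x"
  shows "pair_jump x (Suc j) < pair_jump x j"
  using descending_chain_jump_less[OF assms, of "2 * j + 2"] descending_chain_jump_less[OF assms, of "2 * j + 3"]
  unfolding pair_jump_def by (simp add: numeral_eq_Suc) linarith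

lemma descending_chain_pair_jump_antimono:
  assumes "second_order_descending_chain N x" "i \<le> j"
  shows "pair_jump x j \<le> pair_jump x i"
  using assms(2)
proof (induction j rule: dec_induct)
  case (step j) then show ?case using descending_chain_pair_jump_less[OF assms(1), of j] by simp
qed simp

lemma descending_chain_jump_le:
  assumes "second_order_descending_chain N x"
  shows "jump x i \<le> pair_jump x 0"
proof -
  have "jump x i \<le> pair_jump x (i div 2)"
    unfolding pair_jump_def by (cases "even i") (auto elim!: evenE oddE)
  also have "\<dots> \<le> pair_jump x 0" by (rule descending_chain_pair_jump_antimono[OF assms]) simp
  finally show ?thesis .
qed

lemma descending_chain_norm_le:
  assumes "second_order_descending_chain N x"
  shows "norm (x i) \<le> norm (x 0) + i * pair_jump x 0"
proof (induction i)
  case (Suc i)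
  have "norm (x (Suc i)) \<le> norm (x i) + jump x i"
    unfolding jump_def using norm_triangle_sub[of "x (Suc i)" "x i"] by simp
  with Suc descending_chain_jump_le[OF assms, of i] show ?case by (simp add: algebra_simps)
qed simp

section \<open>Jump windows and grid paths\<close>

text \<open>Pairs of increments whose larger norm lies at level l, i.e. in [l h, (l + 1) h), up to the
  discretisation error 2 n \<delta>.\<close>

definition jump_window :: "real \<Rightarrow> real \<Rightarrow> nat \<Rightarrow> ('a::euclidean_space \<times> 'a) set" where
  "jump_window \<delta> h l = {(v, v'). v \<in> grid \<delta> \<and> v' \<in> grid \<delta> \<and>
      real l * h - 2 * real DIM('a) * \<delta> \<le> max (norm v) (norm v') \<and>
      max (norm v) (norm v') \<le> (real l + 1) * h + 2 * real DIM('a) * \<delta>}"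

lemma jump_window_subset:
  fixes \<delta> h :: real and l :: nat
  defines "a \<equiv> real l * h - 2 * real DIM('a::euclidean_space) * \<delta>"
    and "b \<equiv> (real l + 1) * h + 2 * real DIM('a) * \<delta>"
  shows "(jump_window \<delta> h l :: ('a \<times> 'a) set) \<subseteq>
    grid_shell \<delta> a b \<times> grid_shell \<delta> 0 b \<union> grid_shell \<delta> 0 b \<times> grid_shell \<delta> a b"
  by (auto simp: jump_window_def grid_shell_def a_def b_def max_def)

lemma finite_card_jump_window:
  fixes \<delta> h :: real and l :: nat
  assumes "\<delta> > 0" "h \<ge> 0"
  defines "a \<equiv> real l * h - 2 * real DIM('a::euclidean_space) * \<delta>"
    and "b \<equiv> (real l + 1) * h + 2 * real DIM('a) * \<delta>"
  shows "finite (jump_window \<delta> h l :: ('a \<times> 'a) set)"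
    and "card (jump_window \<delta> h l :: ('a \<times> 'a) set) \<le>
      2 * card (grid_shell \<delta> a b :: 'a set) * card (grid_shell \<delta> 0 b :: 'a set)"
proof -
  define S :: "'a set" where "S = grid_shell \<delta> a b"
  define T :: "'a set" where "T = grid_shell \<delta> 0 b"
  have "0 \<le> b" "a \<le> b" using assms(1,2) by (simp_all add: a_def b_def algebra_simps)
  then have "finite S" "finite T"
    using finite_card_grid_shell(1)[OF assms(1)] by (simp_all add: S_def T_def)
  then have fin: "finite (S \<times> T \<union> T \<times> S)" by simp
  have sub: "jump_window \<delta> h l \<subseteq> S \<times> T \<union> T \<times> S"
    unfolding S_def T_def a_def b_def by (rule jump_window_subset)
  show "finite (jump_window \<delta> h l :: ('a \<times> 'a) set)" by (rule finite_subset[OF sub fin])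
  have "card (jump_window \<delta> h l :: ('a \<times> 'a) set) \<le> card (S \<times> T \<union> T \<times> S)"
    by (rule card_mono[OF fin sub])
  also have "\<dots> \<le> card (S \<times> T) + card (T \<times> S)" by (rule card_Un_le)
  also have "\<dots> = 2 * card S * card T" by (simp add: card_cartesian_product)
  finally show "card (jump_window \<delta> h l :: ('a \<times> 'a) set) \<le>
      2 * card (grid_shell \<delta> a b :: 'a set) * card (grid_shell \<delta> 0 b :: 'a set)"
    by (simp add: S_def T_def)
qed

lemma card_jump_window_le_shells:
  fixes \<delta> h :: real and l :: nat
  assumes "\<delta> > 0" "h \<ge> 0"
  defines "n \<equiv> DIM('a::euclidean_space)"
  defines "a \<equiv> real l * h - 2 * real n * \<delta>" and "b \<equiv> (real l + 1) * h + 2 * real n * \<delta>"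
  shows "card (jump_window \<delta> h l :: ('a \<times> 'a) set) * \<delta> ^ (2 * n) \<le>
    2 * (card (grid_shell \<delta> a b :: 'a set) * \<delta> ^ n) * (card (grid_shell \<delta> 0 b :: 'a set) * \<delta> ^ n)"
proof -
  have "card (jump_window \<delta> h l :: ('a \<times> 'a) set) \<le> 2 * card (grid_shell \<delta> a b :: 'a set) * card (grid_shell \<delta> 0 b :: 'a set)"
    using finite_card_jump_window(2)[OF assms(1,2), of l] by (simp add: a_def b_def n_def)
  then have "real (card (jump_window \<delta> h l :: ('a \<times> 'a) set)) \<le>
      2 * real (card (grid_shell \<delta> a b :: 'a set)) * real (card (grid_shell \<delta> 0 b :: 'a set))"
    by (metis of_nat_le_iff of_nat_mult of_nat_numeral)
  then have "card (jump_window \<delta> h l :: ('a \<times> 'a) set) * \<delta> ^ (2 * n) \<le>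
      2 * real (card (grid_shell \<delta> a b :: 'a set)) * real (card (grid_shell \<delta> 0 b :: 'a set)) * \<delta> ^ (2 * n)"
    by (rule mult_right_mono) (use assms(1) in simp)
  then show ?thesis
    unfolding mult_2[of n] power_add by (simp only: mult_ac)
qed

lemma card_window_shells_le:
  fixes \<delta> h R :: real and l :: nat
  assumes \<delta>: "\<delta> > 0" and h: "0 < h" "h \<le> R" "real l * h \<le> R" and small: "6 * DIM('a) * \<delta> \<le> h"
  defines "n \<equiv> DIM('a::euclidean_space)" and "\<kappa> \<equiv> measure lborel (ball (0::'a) 1)"
  defines "a \<equiv> real l * h - 2 * real n * \<delta>" and "b \<equiv> (real l + 1) * h + 2 * real n * \<delta>"
  shows "card (grid_shell \<delta> a b :: 'a set) * \<delta> ^ n \<le> \<kappa> * n * (3 * R) ^ (n - 1) * (2 * h)"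
    and "card (grid_shell \<delta> 0 b :: 'a set) * \<delta> ^ n \<le> \<kappa> * (3 * R) ^ n"
proof -
  have "0 \<le> n * \<delta>" using \<delta> by simp
  then have ab: "0 \<le> b" "a \<le> b" "b - a + 2 * n * \<delta> \<le> 2 * h" "b + n * \<delta> \<le> 3 * R"
    using h small by (simp_all add: a_def b_def n_def algebra_simps)
  have \<kappa>: "0 \<le> \<kappa>" by (simp add: \<kappa>_def)
  have "card (grid_shell \<delta> a b :: 'a set) * \<delta> ^ n \<le> \<kappa> * n * (b + n * \<delta>) ^ (n - 1) * (b - a + 2 * n * \<delta>)"
    using card_grid_shell_le[OF \<delta> ab(1,2)] by (simp add: n_def \<kappa>_def)
  also have "\<dots> \<le> \<kappa> * n * (3 * R) ^ (n - 1) * (2 * h)"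
    using ab \<kappa> \<delta> h by (intro mult_mono power_mono mult_nonneg_nonneg) auto
  finally show "card (grid_shell \<delta> a b :: 'a set) * \<delta> ^ n \<le> \<kappa> * n * (3 * R) ^ (n - 1) * (2 * h)" .
  have "card (grid_shell \<delta> 0 b :: 'a set) * \<delta> ^ n \<le> \<kappa> * (b + n * \<delta>) ^ n"
    using card_grid_ball_le[OF \<delta> ab(1)] by (simp add: n_def \<kappa>_def)
  also have "\<dots> \<le> \<kappa> * (3 * R) ^ n"
    using ab \<kappa> \<delta> by (intro mult_left_mono power_mono) auto
  finally show "card (grid_shell \<delta> 0 b :: 'a set) * \<delta> ^ n \<le> \<kappa> * (3 * R) ^ n" .
qed

text \<open>Each window is essentially a shell of width h in one coordinate of the pair, which is where
  the factor 1/H comes from.\<close>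

lemma card_jump_window_le:
  fixes \<delta> h R :: real and H l :: nat
  assumes \<delta>: "\<delta> > 0" and R: "R > 0" and H: "H \<ge> 1" "h = R / H" and "l \<le> H"
    and small: "6 * DIM('a) * \<delta> \<le> h"
  defines "n \<equiv> DIM('a::euclidean_space)" and "\<kappa> \<equiv> measure lborel (ball (0::'a) 1)"
  shows "card (jump_window \<delta> h l :: ('a \<times> 'a) set) * \<delta> ^ (2 * n) \<le> 4 * \<kappa> ^ 2 * n * (3 * R) ^ (2 * n) / H"
proof -
  define a where "a = real l * h - 2 * n * \<delta>"
  define b where "b = (real l + 1) * h + 2 * n * \<delta>"
  have h: "0 < h" "h \<le> R" using R H by (simp_all add: divide_le_eq)
  have "real l * h \<le> real H * h" using h(1) \<open>l \<le> H\<close> by (intro mult_right_mono) auto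
  then have lh: "real l * h \<le> R" using H by simp
  have \<kappa>: "0 \<le> \<kappa>" by (simp add: \<kappa>_def)
  have shell: "card (grid_shell \<delta> a b :: 'a set) * \<delta> ^ n \<le> \<kappa> * n * (3 * R) ^ (n - 1) * (2 * h)"
    and ball: "card (grid_shell \<delta> 0 b :: 'a set) * \<delta> ^ n \<le> \<kappa> * (3 * R) ^ n"
    using card_window_shells_le[OF \<delta> h lh small] by (simp_all add: a_def b_def n_def \<kappa>_def)
  have "card (jump_window \<delta> h l :: ('a \<times> 'a) set) * \<delta> ^ (2 * n) \<le>
      2 * (card (grid_shell \<delta> a b :: 'a set) * \<delta> ^ n) * (card (grid_shell \<delta> 0 b :: 'a set) * \<delta> ^ n)"
    using card_jump_window_le_shells[OF \<delta> less_imp_le[OF h(1)], of l] by (simp add: a_def b_def n_def)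
  also have "\<dots> \<le> 2 * ((\<kappa> * n * (3 * R) ^ (n - 1) * (2 * h)) * (\<kappa> * (3 * R) ^ n))"
    unfolding mult.assoc[of 2] using \<kappa> R h \<delta>
    by (intro mult_left_mono mult_mono[OF shell ball]) auto
  also have "\<dots> = 4 * \<kappa> ^ 2 * n * (((3 * R) ^ (n - 1) * R) * (3 * R) ^ n) / H"
    using H by (simp add: power2_eq_square mult_ac)
  also have "\<dots> \<le> 4 * \<kappa> ^ 2 * n * (((3 * R) ^ (n - 1) * (3 * R)) * (3 * R) ^ n) / H"
    using R \<kappa> by (intro divide_right_mono mult_right_mono mult_left_mono) auto
  also have "(3 * R) ^ (n - 1) * (3 * R) = (3 * R) ^ n"
    by (metis DIM_positive n_def power_minus_mult)
  also have "(3 * R) ^ n * (3 * R) ^ n = (3 * R) ^ (2 * n)"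
    by (simp only: mult_2 power_add)
  finally show ?thesis .
qed

definition pair_increments :: "(nat \<Rightarrow> 'a::ab_group_add) \<Rightarrow> nat \<Rightarrow> 'a \<times> 'a" where
  "pair_increments z j = (z (2 * j + 1) - z (2 * j), z (2 * j + 2) - z (2 * j + 1))"

definition grid_paths :: "real \<Rightarrow> real \<Rightarrow> real \<Rightarrow> nat \<Rightarrow> (nat \<Rightarrow> nat) \<Rightarrow> (nat \<Rightarrow> 'a::euclidean_space) set" where
  "grid_paths \<delta> h K k l = {z \<in> {..2 * k} \<rightarrow>\<^sub>E grid \<delta>. norm (z 0) \<le> K + real DIM('a) * \<delta> \<and>
      (\<forall>j<k. pair_increments z j \<in> jump_window \<delta> h (l j))}"

lemma eq_if_pair_increments_eq:
  fixes z z' :: "nat \<Rightarrow> 'a::ab_group_add"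
  assumes "z 0 = z' 0" "\<And>j. j < k \<Longrightarrow> pair_increments z j = pair_increments z' j" "i \<le> 2 * k"
  shows "z i = z' i"
  using assms(3)
proof (induction i)
  case (Suc i)
  have "z (Suc i) - z i = z' (Suc i) - z' i"
  proof (cases "even i")
    case True
    then obtain j where "i = 2 * j" by blast
    with assms(2)[of j] Suc.prems show ?thesis by (simp add: pair_increments_def)
  next
    case False
    then obtain j where "i = 2 * j + 1" by (blast elim: oddE)
    with assms(2)[of j] Suc.prems show ?thesis by (simp add: pair_increments_def numeral_eq_Suc)
  qed
  with Suc show ?case by (metis Suc_leD diff_add_cancel)
qed (use assms(1) in simp)

lemma finite_card_grid_paths:
  fixes \<delta> h K :: real
  assumes "\<delta> > 0" "h \<ge> 0" "K \<ge> 0"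
  shows "finite (grid_paths \<delta> h K k l :: (nat \<Rightarrow> 'a::euclidean_space) set)"
    and "card (grid_paths \<delta> h K k l :: (nat \<Rightarrow> 'a) set) \<le>
      card (grid_shell \<delta> 0 (K + real DIM('a) * \<delta>) :: 'a set) * (\<Prod>j<k. card (jump_window \<delta> h (l j) :: ('a \<times> 'a) set))"
proof -
  define P where "P = (grid_paths \<delta> h K k l :: (nat \<Rightarrow> 'a) set)"
  define T where "T = (grid_shell \<delta> 0 (K + real DIM('a) * \<delta>) :: 'a set) \<times> Pi\<^sub>E {..<k} (\<lambda>j. jump_window \<delta> h (l j) :: ('a \<times> 'a) set)"
  define f where "f z = (z 0, \<lambda>j\<in>{..<k}. pair_increments z j)" for z :: "nat \<Rightarrow> 'a"
  have "finite (grid_shell \<delta> 0 (K + real DIM('a) * \<delta>) :: 'a set)"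
    using assms by (intro finite_card_grid_shell(1)) auto
  then have fin: "finite T"
    unfolding T_def using finite_card_jump_window(1)[OF assms(1,2)] by (intro finite_cartesian_product finite_PiE) auto
  have img: "f ` P \<subseteq> T"
    by (auto simp: f_def T_def P_def grid_paths_def grid_shell_def PiE_iff split: if_splits)
  have inj: "inj_on f P"
  proof (rule inj_onI)
    fix z z' assume z: "z \<in> P" "z' \<in> P" and "f z = f z'"
    then have "z 0 = z' 0" "\<And>j. j < k \<Longrightarrow> pair_increments z j = pair_increments z' j"
      by (auto simp: f_def fun_eq_iff split: if_splits)
    then have "z i = z' i" if "i \<le> 2 * k" for i
      using that by (rule eq_if_pair_increments_eq)
    with z show "z = z'"
      unfolding P_def grid_paths_def by (intro PiE_ext[of z "{..2 * k}" "\<lambda>_. grid \<delta>"]) auto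
  qed
  have "finite P" "card P \<le> card T"
    using finite_imageD[OF finite_subset[OF img fin] inj] card_inj_on_le[OF inj img fin] .
  then show "finite (grid_paths \<delta> h K k l :: (nat \<Rightarrow> 'a) set)"
    and "card (grid_paths \<delta> h K k l :: (nat \<Rightarrow> 'a) set) \<le>
      card (grid_shell \<delta> 0 (K + real DIM('a) * \<delta>) :: 'a set) * (\<Prod>j<k. card (jump_window \<delta> h (l j) :: ('a \<times> 'a) set))"
    by (simp_all add: P_def T_def card_cartesian_product card_PiE)
qed

lemma card_grid_paths_le:
  fixes \<delta> h R K lam :: real and H k :: nat and l :: "nat \<Rightarrow> nat"
  assumes \<delta>: "\<delta> > 0" and R: "R > 0" and H: "H \<ge> 1" "h = R / H" and K: "K \<ge> 0" and lam: "lam > 0"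
    and small: "6 * DIM('a) * \<delta> \<le> h" "2 * DIM('a) * \<delta> \<le> 1" and l: "l \<in> antitone_levels k H"
  shows "card (grid_paths \<delta> h K k l :: (nat \<Rightarrow> 'a::euclidean_space) set) * (lam * \<delta> ^ DIM('a)) ^ (2 * k + 1) \<le>
    lam * measure lborel (ball (0::'a) 1) * (K + 1) ^ DIM('a) *
    (lam ^ 2 * (4 * measure lborel (ball (0::'a) 1) ^ 2 * DIM('a) * (3 * R) ^ (2 * DIM('a))) / H) ^ k"
proof -
  define n where "n = DIM('a)"
  define \<kappa> where "\<kappa> = measure lborel (ball (0::'a) 1)"
  define \<mu> where "\<mu> = lam * \<delta> ^ n"
  define C where "C = 4 * \<kappa> ^ 2 * n * (3 * R) ^ (2 * n)"
  define cS where "cS = real (card (grid_shell \<delta> 0 (K + real n * \<delta>) :: 'a set))"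
  define cW where "cW j = real (card (jump_window \<delta> h (l j) :: ('a \<times> 'a) set))" for j
  have h: "h \<ge> 0" using R H by simp
  have \<mu>: "\<mu> \<ge> 0" using lam \<delta> by (simp add: \<mu>_def)
  have start: "cS * \<mu> \<le> lam * \<kappa> * (K + 1) ^ n"
  proof -
    have "cS * \<delta> ^ n \<le> \<kappa> * (K + real n * \<delta> + n * \<delta>) ^ n"
      unfolding cS_def \<kappa>_def n_def using K \<delta> by (intro card_grid_ball_le) auto
    also have "\<dots> \<le> \<kappa> * (K + 1) ^ n"
      using small(2) K \<delta> by (intro mult_left_mono power_mono) (auto simp: n_def \<kappa>_def mult_ac)
    finally show ?thesis using lam by (simp add: \<mu>_def mult_left_mono mult_ac)
  qed
  have window: "cW j * \<mu> ^ 2 \<le> lam ^ 2 * C / H" if "j < k" for j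
  proof -
    have "l j \<le> H" using l that by (auto simp: antitone_levels_def PiE_iff)
    then have "cW j * \<delta> ^ (2 * n) \<le> C / H"
      unfolding cW_def C_def \<kappa>_def n_def using card_jump_window_le[OF \<delta> R H _ small(1)] by simp
    then have "lam ^ 2 * (cW j * \<delta> ^ (2 * n)) \<le> lam ^ 2 * (C / H)" by (rule mult_left_mono) simp
    then show ?thesis by (simp add: \<mu>_def power_mult_distrib power_mult[symmetric] mult_ac)
  qed
  have "card (grid_paths \<delta> h K k l :: (nat \<Rightarrow> 'a) set) \<le> cS * (\<Prod>j<k. cW j)"
    using finite_card_grid_paths(2)[OF \<delta> h K, of k l] unfolding cS_def cW_def n_def
    by (metis of_nat_le_iff of_nat_mult of_nat_prod)
  then have "card (grid_paths \<delta> h K k l :: (nat \<Rightarrow> 'a) set) * \<mu> ^ (2 * k + 1) \<le> cS * (\<Prod>j<k. cW j) * \<mu> ^ (2 * k + 1)"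
    using \<mu> by (intro mult_right_mono) auto
  also have "\<dots> = (cS * \<mu>) * (\<Prod>j<k. cW j * \<mu> ^ 2)"
    by (simp add: prod.distrib power_mult[symmetric] mult_ac)
  also have "\<dots> \<le> (lam * \<kappa> * (K + 1) ^ n) * (\<Prod>j<k. lam ^ 2 * C / H)"
  proof (rule mult_mono[OF start])
    show "(\<Prod>j<k. cW j * \<mu> ^ 2) \<le> (\<Prod>j<k. lam ^ 2 * C / H)"
      using window by (intro prod_mono) (simp add: cW_def)
    show "0 \<le> lam * \<kappa> * (K + 1) ^ n" using lam K by (simp add: \<kappa>_def)
    show "0 \<le> (\<Prod>j<k. cW j * \<mu> ^ 2)" by (intro prod_nonneg) (simp add: cW_def)
  qed
  finally show ?thesis by (simp add: \<mu>_def C_def \<kappa>_def n_def)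
qed

section \<open>Homogeneous Poisson point processes\<close>

lemma homogeneous_PPP_prob_space: "homogeneous_PPP M lam Phi \<Longrightarrow> prob_space M"
  and homogeneous_PPP_intensity_pos: "homogeneous_PPP M lam Phi \<Longrightarrow> lam > 0"
  unfolding homogeneous_PPP_def by blast+

lemma homogeneous_PPP_finite:
  "homogeneous_PPP M lam Phi \<Longrightarrow> \<omega> \<in> space M \<Longrightarrow> bounded B \<Longrightarrow> finite (Phi \<omega> \<inter> B)"
  unfolding homogeneous_PPP_def by blast

lemma
  assumes "homogeneous_PPP M lam Phi" "B \<in> sets lborel" "bounded B"
  shows homogeneous_PPP_count_measurable: "(\<lambda>\<omega>. card (Phi \<omega> \<inter> B)) \<in> measurable M (count_space UNIV)"
    and homogeneous_PPP_count_distr: "measure M {\<omega>\<in>space M. card (Phi \<omega> \<inter> B) = k} =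
      (lam * measure lborel B) ^ k / fact k * exp (- (lam * measure lborel B))"
  using assms unfolding homogeneous_PPP_def by blast+

lemma homogeneous_PPP_indep:
  fixes B :: "nat \<Rightarrow> 'a::euclidean_space set"
  assumes "homogeneous_PPP M lam Phi" "finite I" "\<And>i. i \<in> I \<Longrightarrow> B i \<in> sets lborel \<and> bounded (B i)"
    and "disjoint_family_on B I"
  shows "prob_space.indep_vars M (\<lambda>_. count_space UNIV) (\<lambda>i \<omega>. card (Phi \<omega> \<inter> B i)) I"
proof -
  from assms(1) have "\<forall>(I::nat set) (B::nat \<Rightarrow> 'a set).
      finite I \<and> (\<forall>i\<in>I. B i \<in> sets lborel \<and> bounded (B i)) \<and> disjoint_family_on B I \<longrightarrow>
      prob_space.indep_vars M (\<lambda>_. count_space UNIV) (\<lambda>i \<omega>. card (Phi \<omega> \<inter> B i)) I"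
    unfolding homogeneous_PPP_def by (elim conjE)
  with assms(2-4) show ?thesis by blast
qed

lemma sets_homogeneous_PPP_count:
  assumes "homogeneous_PPP M lam Phi" "B \<in> sets lborel" "bounded B"
  shows "{\<omega>\<in>space M. Q (card (Phi \<omega> \<inter> B))} \<in> sets M"
  using measurable_sets[OF homogeneous_PPP_count_measurable[OF assms], of "{n. Q n}"] by (simp add: vimage_def Int_def conj_commute)

lemma prob_homogeneous_PPP_occupied_le:
  assumes H: "homogeneous_PPP M lam Phi" and B: "B \<in> sets lborel" "bounded B"
  shows "measure M {\<omega>\<in>space M. 1 \<le> card (Phi \<omega> \<inter> B)} \<le> lam * measure lborel B"
proof -
  interpret prob_space M using homogeneous_PPP_prob_space[OF H] .
  define \<mu> where "\<mu> = lam * measure lborel B"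
  have "{\<omega>\<in>space M. 1 \<le> card (Phi \<omega> \<inter> B)} = space M - {\<omega>\<in>space M. card (Phi \<omega> \<inter> B) = 0}"
    by auto
  then have "prob {\<omega>\<in>space M. 1 \<le> card (Phi \<omega> \<inter> B)} = 1 - prob {\<omega>\<in>space M. card (Phi \<omega> \<inter> B) = 0}"
    using prob_compl[OF sets_homogeneous_PPP_count[OF H B, of "\<lambda>n. n = 0"]] by simp
  also have "\<dots> = 1 - exp (- \<mu>)" using homogeneous_PPP_count_distr[OF H B, of 0] by (simp add: \<mu>_def)
  also have "\<dots> \<le> \<mu>" using exp_ge_add_one_self[of "- \<mu>"] by simp
  finally show ?thesis by (simp add: \<mu>_def)
qed

lemma prob_homogeneous_PPP_two_points_le:
  assumes H: "homogeneous_PPP M lam Phi" and B: "B \<in> sets lborel" "bounded B"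
  shows "measure M {\<omega>\<in>space M. 2 \<le> card (Phi \<omega> \<inter> B)} \<le> (lam * measure lborel B) ^ 2"
proof -
  interpret prob_space M using homogeneous_PPP_prob_space[OF H] .
  define \<mu> where "\<mu> = lam * measure lborel B"
  define E where "E k = {\<omega>\<in>space M. card (Phi \<omega> \<inter> B) = k}" for k
  have E: "E k \<in> sets M" for k unfolding E_def by (rule sets_homogeneous_PPP_count[OF H B])
  have "{\<omega>\<in>space M. 2 \<le> card (Phi \<omega> \<inter> B)} = space M - (E 0 \<union> E 1)"
    by (auto simp: E_def)
  then have "prob {\<omega>\<in>space M. 2 \<le> card (Phi \<omega> \<inter> B)} = 1 - prob (E 0 \<union> E 1)"
    using prob_compl[of "E 0 \<union> E 1"] E by simp
  also have "prob (E 0 \<union> E 1) = prob (E 0) + prob (E 1)"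
    using E by (intro finite_measure_Union) (auto simp: E_def)
  also have "prob (E 0) = exp (- \<mu>)"
    using homogeneous_PPP_count_distr[OF H B, of 0] by (simp add: \<mu>_def E_def)
  also have "prob (E 1) = \<mu> * exp (- \<mu>)"
    using homogeneous_PPP_count_distr[OF H B, of 1] by (simp add: \<mu>_def E_def)
  also have "1 - (exp (- \<mu>) + \<mu> * exp (- \<mu>)) \<le> \<mu> ^ 2"
  proof -
    have "0 \<le> \<mu>" using homogeneous_PPP_intensity_pos[OF H] by (simp add: \<mu>_def)
    then have "(1 + \<mu>) * (1 - \<mu>) \<le> (1 + \<mu>) * exp (- \<mu>)"
      using exp_ge_add_one_self[of "- \<mu>"] by (intro mult_left_mono) auto
    then show ?thesis by (simp add: algebra_simps power2_eq_square)
  qed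
  finally show ?thesis by (simp add: \<mu>_def)
qed

lemma prob_homogeneous_PPP_all_occupied:
  fixes B :: "nat \<Rightarrow> 'a::euclidean_space set"
  assumes "homogeneous_PPP M lam Phi" "finite I" "I \<noteq> {}"
    and "\<And>i. i \<in> I \<Longrightarrow> B i \<in> sets lborel \<and> bounded (B i)" and "disjoint_family_on B I"
  shows "measure M (\<Inter>i\<in>I. {\<omega>\<in>space M. 1 \<le> card (Phi \<omega> \<inter> B i)}) =
    (\<Prod>i\<in>I. measure M {\<omega>\<in>space M. 1 \<le> card (Phi \<omega> \<inter> B i)})"
proof -
  interpret prob_space M using homogeneous_PPP_prob_space[OF assms(1)] .
  let ?X = "\<lambda>i \<omega>. card (Phi \<omega> \<inter> B i)"
  have indep: "indep_sets (\<lambda>i. {?X i -` A \<inter> space M | A. A \<in> sets (count_space UNIV)}) I"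
    using homogeneous_PPP_indep[OF assms(1,2,4,5)] unfolding indep_vars_def2 by (rule conjunct2)
  have mem: "\<forall>i\<in>I. ?X i -` {n. 1 \<le> n} \<inter> space M \<in> {?X i -` A \<inter> space M | A. A \<in> sets (count_space UNIV)}"
    by (intro ballI CollectI exI[of _ "{n. 1 \<le> n}"] conjI refl) simp
  have eq: "{\<omega>\<in>space M. 1 \<le> card (Phi \<omega> \<inter> B i)} = ?X i -` {n. 1 \<le> n} \<inter> space M" for i
    by auto
  show ?thesis
    unfolding eq by (rule indep_setsD[OF indep subset_refl assms(3,2) mem])
qed

section \<open>Events covering the descending chains\<close>

definition path_event :: "'w measure \<Rightarrow> ('w \<Rightarrow> 'a::euclidean_space set) \<Rightarrow> real \<Rightarrow> nat \<Rightarrow> (nat \<Rightarrow> 'a) \<Rightarrow> 'w set" where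
  "path_event M Phi \<delta> k z = (\<Inter>i\<in>{..2 * k}. {\<omega>\<in>space M. 1 \<le> card (Phi \<omega> \<inter> cell \<delta> (z i))})"

definition crowded_event :: "'w measure \<Rightarrow> ('w \<Rightarrow> 'a::euclidean_space set) \<Rightarrow> real \<Rightarrow> real \<Rightarrow> 'w set" where
  "crowded_event M Phi \<delta> \<rho> = (\<Union>p\<in>(grid_shell \<delta> 0 \<rho> :: 'a set). {\<omega>\<in>space M. 2 \<le> card (Phi \<omega> \<inter> cell \<delta> p)})"

text \<open>A chain either visits 2k + 1 distinct cells along a grid path with antitone levels, or two
  of its first 2k + 1 points share a cell near the origin.\<close>

definition chain_cover ::
    "'w measure \<Rightarrow> ('w \<Rightarrow> 'a::euclidean_space set) \<Rightarrow> real \<Rightarrow> real \<Rightarrow> real \<Rightarrow> nat \<Rightarrow> nat \<Rightarrow> real \<Rightarrow> 'w set" where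
  "chain_cover M Phi \<delta> h K k H \<rho> = crowded_event M Phi \<delta> \<rho> \<union>
     (\<Union>l\<in>antitone_levels k H. \<Union>z\<in>{z \<in> (grid_paths \<delta> h K k l :: (nat \<Rightarrow> 'a) set). inj_on z {..2 * k}}.
        path_event M Phi \<delta> k z)"

lemma nat_floor_divide_bounds:
  fixes h y :: real
  assumes "h > 0" "y \<ge> 0"
  shows "real (nat \<lfloor>y / h\<rfloor>) * h \<le> y" "y < (real (nat \<lfloor>y / h\<rfloor>) + 1) * h"
  using floor_divide_bounds[OF assms(1), of y] assms by (simp_all add: algebra_simps)

lemma descending_chain_levels:
  assumes chain: "second_order_descending_chain N x" and "pair_jump x 0 \<le> R"
    and "R > 0" "H \<ge> 1" "h = R / H"
  shows "(\<lambda>j\<in>{..<k}. nat \<lfloor>pair_jump x j / h\<rfloor>) \<in> antitone_levels k H"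
  unfolding antitone_levels_def
proof (intro CollectI conjI allI impI)
  have h: "h > 0" using assms by simp
  show "(\<lambda>j\<in>{..<k}. nat \<lfloor>pair_jump x j / h\<rfloor>) \<in> {..<k} \<rightarrow>\<^sub>E {..H}"
  proof (rule PiE_I)
    fix j assume "j \<in> {..<k}"
    have "pair_jump x j \<le> R"
      using descending_chain_pair_jump_antimono[OF chain, of 0 j] assms(2) by simp
    then have "pair_jump x j / h \<le> R / h" using h by (simp add: divide_right_mono)
    also have "R / h = H" using assms by simp
    finally have "\<lfloor>pair_jump x j / h\<rfloor> \<le> int H" by (simp add: floor_le_iff)
    with \<open>j \<in> {..<k}\<close> show "(\<lambda>j\<in>{..<k}. nat \<lfloor>pair_jump x j / h\<rfloor>) j \<in> {..H}" by simp
  qed simp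
  fix i j assume "i \<le> j" "j < k"
  with h have "\<lfloor>pair_jump x j / h\<rfloor> \<le> \<lfloor>pair_jump x i / h\<rfloor>"
    by (intro floor_mono divide_right_mono descending_chain_pair_jump_antimono[OF chain]) auto
  with \<open>i \<le> j\<close> \<open>j < k\<close> show "(\<lambda>j\<in>{..<k}. nat \<lfloor>pair_jump x j / h\<rfloor>) j \<le> (\<lambda>j\<in>{..<k}. nat \<lfloor>pair_jump x j / h\<rfloor>) i"
    by simp
qed

text \<open>Increments of cell corners differ from the jumps of the chain by at most 2 n \<delta>.\<close>

lemma descending_chain_grid_path:
  fixes x :: "nat \<Rightarrow> 'a::euclidean_space" and \<delta> h K :: real
  assumes chain: "second_order_descending_chain N x" and "norm (x 0) \<le> K" "\<delta> > 0" "h > 0"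
  shows "(\<lambda>i\<in>{..2 * k}. cell_corner \<delta> (x i)) \<in> grid_paths \<delta> h K k (\<lambda>j\<in>{..<k}. nat \<lfloor>pair_jump x j / h\<rfloor>)"
  unfolding grid_paths_def
proof (intro CollectI conjI allI impI)
  show "(\<lambda>i\<in>{..2 * k}. cell_corner \<delta> (x i)) \<in> {..2 * k} \<rightarrow>\<^sub>E grid \<delta>"
    using cell_corner_in_grid[OF \<open>\<delta> > 0\<close>] by auto
  show "norm ((\<lambda>i\<in>{..2 * k}. cell_corner \<delta> (x i)) 0) \<le> K + real DIM('a) * \<delta>"
    using norm_cell_corner_le[OF \<open>\<delta> > 0\<close>, of "x 0"] assms(2) by simp
next
  fix j assume j: "j < k"
  define l where "l = nat \<lfloor>pair_jump x j / h\<rfloor>"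
  define v where "v = cell_corner \<delta> (x (2 * j + 1)) - cell_corner \<delta> (x (2 * j))"
  define v' where "v' = cell_corner \<delta> (x (2 * j + 2)) - cell_corner \<delta> (x (2 * j + 1))"
  have "\<bar>norm v - jump x (2 * j)\<bar> \<le> 2 * DIM('a) * \<delta>"
    unfolding v_def jump_def using norm_diff_cell_corners[OF \<open>\<delta> > 0\<close>] by simp
  moreover have "\<bar>norm v' - jump x (2 * j + 1)\<bar> \<le> 2 * DIM('a) * \<delta>"
    unfolding v'_def jump_def using norm_diff_cell_corners[OF \<open>\<delta> > 0\<close>, of "x (2 * j + 2)"] by simp
  moreover have "real l * h \<le> pair_jump x j" "pair_jump x j < (real l + 1) * h"
    unfolding l_def using pair_jump_nonneg by (rule nat_floor_divide_bounds[OF \<open>h > 0\<close>])+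
  ultimately have "real l * h - 2 * DIM('a) * \<delta> \<le> max (norm v) (norm v')"
    "max (norm v) (norm v') \<le> (real l + 1) * h + 2 * DIM('a) * \<delta>"
    unfolding pair_jump_def by (auto simp: max_def abs_le_iff split: if_splits)
  moreover have "v \<in> grid \<delta>" "v' \<in> grid \<delta>"
    unfolding v_def v'_def using cell_corner_in_grid[OF \<open>\<delta> > 0\<close>] by (blast intro: grid_diff)+
  ultimately show "pair_increments (\<lambda>i\<in>{..2 * k}. cell_corner \<delta> (x i)) j
    \<in> jump_window \<delta> h ((\<lambda>j\<in>{..<k}. nat \<lfloor>pair_jump x j / h\<rfloor>) j)"
    using j by (simp add: jump_window_def pair_increments_def v_def v'_def l_def)
qed

lemma descending_chain_in_crowded_event:
  fixes Phi :: "'w \<Rightarrow> 'a::euclidean_space set" and \<delta> R K :: real and k :: nat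
  assumes PPP: "homogeneous_PPP M lam Phi" and \<omega>: "\<omega> \<in> space M"
    and chain: "second_order_descending_chain (Phi \<omega>) x"
    and "norm (x 0) \<le> K" "pair_jump x 0 \<le> R" and \<delta>: "\<delta> > 0" and "\<rho> = K + 2 * k * R + DIM('a) * \<delta>"
    and "i \<le> 2 * k" "i \<noteq> i'" "cell_corner \<delta> (x i) = cell_corner \<delta> (x i')"
  shows "\<omega> \<in> crowded_event M Phi \<delta> \<rho>"
proof -
  define p where "p = cell_corner \<delta> (x i)"
  have "norm p \<le> norm (x i) + DIM('a) * \<delta>"
    unfolding p_def by (rule norm_cell_corner_le[OF \<delta>])
  also have "\<dots> \<le> K + i * R + DIM('a) * \<delta>"
    using descending_chain_norm_le[OF chain, of i] assms(4,5) mult_left_mono[of "pair_jump x 0" R "real i"]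
    by simp
  also have "\<dots> \<le> \<rho>"
    using assms pair_jump_nonneg[of x 0] by (simp add: mult_right_mono)
  finally have "p \<in> grid_shell \<delta> 0 \<rho>" by (simp add: grid_shell_def p_def cell_corner_in_grid[OF \<delta>])
  moreover have "{x i, x i'} \<subseteq> Phi \<omega> \<inter> cell \<delta> p" "x i \<noteq> x i'"
    using chain assms(9,10) by (auto simp: second_order_descending_chain_def cell_def p_def inj_eq)
  then have "2 \<le> card (Phi \<omega> \<inter> cell \<delta> p)"
    using card_mono[OF homogeneous_PPP_finite[OF PPP \<omega> bounded_cell[OF \<delta>]]] by (metis card_2_iff)
  ultimately show ?thesis
    using \<omega> by (auto simp: crowded_event_def)
qed

lemma descending_chain_in_chain_cover:
  fixes Phi :: "'w \<Rightarrow> 'a::euclidean_space set" and \<delta> h R K :: real and k H :: nat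
  assumes PPP: "homogeneous_PPP M lam Phi" and \<omega>: "\<omega> \<in> space M"
    and chain: "second_order_descending_chain (Phi \<omega>) x"
    and "norm (x 0) \<le> K" "pair_jump x 0 \<le> R" "R > 0"
    and \<delta>: "\<delta> > 0" and "H \<ge> 1" "h = R / H" "\<rho> = K + 2 * k * R + DIM('a) * \<delta>"
  shows "\<omega> \<in> chain_cover M Phi \<delta> h K k H \<rho>"
proof -
  define z where "z = (\<lambda>i\<in>{..2 * k}. cell_corner \<delta> (x i))"
  show ?thesis
  proof (cases "inj_on z {..2 * k}")
    case True
    have "z \<in> grid_paths \<delta> h K k (\<lambda>j\<in>{..<k}. nat \<lfloor>pair_jump x j / h\<rfloor>)"
      unfolding z_def using assms by (intro descending_chain_grid_path[OF chain]) auto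
    moreover have "(\<lambda>j\<in>{..<k}. nat \<lfloor>pair_jump x j / h\<rfloor>) \<in> antitone_levels k H"
      using assms by (intro descending_chain_levels[OF chain]) auto
    moreover have "1 \<le> card (Phi \<omega> \<inter> cell \<delta> (z i))" if "i \<le> 2 * k" for i
    proof -
      have "x i \<in> Phi \<omega> \<inter> cell \<delta> (z i)"
        using that chain by (simp add: z_def cell_def second_order_descending_chain_def)
      then show ?thesis
        using homogeneous_PPP_finite[OF PPP \<omega> bounded_cell[OF \<delta>]] by (metis One_nat_def Suc_leI card_gt_0_iff empty_iff)
    qed
    then have "\<omega> \<in> path_event M Phi \<delta> k z" using \<omega> by (auto simp: path_event_def)
    ultimately show ?thesis using True unfolding chain_cover_def by blast
  next
    case False
    then obtain i i' where ii: "i \<le> 2 * k" "i' \<le> 2 * k" "i \<noteq> i'" "z i = z i'"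
      by (auto simp: inj_on_def)
    then have cell: "cell_corner \<delta> (x i) = cell_corner \<delta> (x i')" by (simp add: z_def)
    have "\<omega> \<in> crowded_event M Phi \<delta> \<rho>"
      by (rule descending_chain_in_crowded_event[OF PPP \<omega> chain assms(4,5) \<delta> assms(10) ii(1,3) cell])
    then show ?thesis by (simp add: chain_cover_def)
  qed
qed

lemma sets_homogeneous_PPP_cell_count:
  fixes Phi :: "'w \<Rightarrow> 'a::euclidean_space set"
  assumes "homogeneous_PPP M lam Phi" "\<delta> > 0"
  shows "{\<omega>\<in>space M. Q (card (Phi \<omega> \<inter> cell \<delta> p))} \<in> sets M"
  by (rule sets_homogeneous_PPP_count[OF assms(1) sets_cell bounded_cell[OF assms(2)]])

lemma sets_path_event:
  fixes Phi :: "'w \<Rightarrow> 'a::euclidean_space set"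
  assumes "homogeneous_PPP M lam Phi" "\<delta> > 0"
  shows "path_event M Phi \<delta> k z \<in> sets M"
  unfolding path_event_def using sets_homogeneous_PPP_cell_count[OF assms] by (intro sets.finite_INT) auto

text \<open>Distinct cells carry independent counts, so this is the product of 2k+1 occupation
  probabilities.\<close>

lemma measure_path_event_le:
  fixes Phi :: "'w \<Rightarrow> 'a::euclidean_space set"
  assumes PPP: "homogeneous_PPP M lam Phi" and \<delta>: "\<delta> > 0" and "inj_on z {..2 * k}"
  shows "measure M (path_event M Phi \<delta> k z) \<le> (lam * \<delta> ^ DIM('a)) ^ (2 * k + 1)"
proof -
  have "disjoint_family_on (\<lambda>i. cell \<delta> (z i)) {..2 * k}"
    using assms(3) by (auto simp: disjoint_family_on_def cell_def dest: inj_onD)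
  then have "measure M (path_event M Phi \<delta> k z) =
      (\<Prod>i\<in>{..2 * k}. measure M {\<omega>\<in>space M. 1 \<le> card (Phi \<omega> \<inter> cell \<delta> (z i))})"
    unfolding path_event_def using sets_cell bounded_cell[OF \<delta>]
    by (intro prob_homogeneous_PPP_all_occupied[OF PPP]) auto
  also have "\<dots> \<le> (\<Prod>i\<in>{..2 * k}. lam * \<delta> ^ DIM('a))"
  proof (rule prod_mono)
    fix i
    have "measure M {\<omega>\<in>space M. 1 \<le> card (Phi \<omega> \<inter> cell \<delta> (z i))} \<le> lam * measure lborel (cell \<delta> (z i))"
      by (rule prob_homogeneous_PPP_occupied_le[OF PPP sets_cell bounded_cell[OF \<delta>]])
    also have "\<dots> \<le> lam * \<delta> ^ DIM('a)"
      using measure_cell_le[OF \<delta>] homogeneous_PPP_intensity_pos[OF PPP] by (intro mult_left_mono) auto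
    finally show "0 \<le> measure M {\<omega>\<in>space M. 1 \<le> card (Phi \<omega> \<inter> cell \<delta> (z i))} \<and>
        measure M {\<omega>\<in>space M. 1 \<le> card (Phi \<omega> \<inter> cell \<delta> (z i))} \<le> lam * \<delta> ^ DIM('a)"
      by simp
  qed
  finally show ?thesis by simp
qed

lemma sets_crowded_event:
  fixes Phi :: "'w \<Rightarrow> 'a::euclidean_space set"
  assumes "homogeneous_PPP M lam Phi" "\<delta> > 0" "\<rho> \<ge> 0"
  shows "crowded_event M Phi \<delta> \<rho> \<in> sets M"
  unfolding crowded_event_def
  using finite_card_grid_shell(1)[of \<delta> \<rho> 0, where 'a='a] assms sets_homogeneous_PPP_cell_count[OF assms(1,2)]
  by (intro sets.finite_UN) auto

lemma measure_crowded_event_le: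
  fixes Phi :: "'w \<Rightarrow> 'a::euclidean_space set" and lam \<delta> \<rho> :: real
  assumes PPP: "homogeneous_PPP M lam Phi" and \<delta>: "\<delta> > 0" and \<rho>: "\<rho> \<ge> 0"
  shows "measure M (crowded_event M Phi \<delta> \<rho>) \<le>
    measure lborel (ball (0::'a) 1) * (\<rho> + DIM('a) * \<delta>) ^ DIM('a) * lam ^ 2 * \<delta> ^ DIM('a)"
proof -
  have "measure M (crowded_event M Phi \<delta> \<rho>) \<le>
      (\<Sum>p\<in>(grid_shell \<delta> 0 \<rho> :: 'a set). measure M {\<omega>\<in>space M. 2 \<le> card (Phi \<omega> \<inter> cell \<delta> p)})"
    unfolding crowded_event_def
    using finite_card_grid_shell(1)[of \<delta> \<rho> 0, where 'a='a] \<delta> \<rho> sets_homogeneous_PPP_cell_count[OF PPP \<delta>]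
    by (intro measure_UNION_le) auto
  also have "\<dots> \<le> (\<Sum>p\<in>(grid_shell \<delta> 0 \<rho> :: 'a set). (lam * \<delta> ^ DIM('a)) ^ 2)"
  proof (rule sum_mono)
    fix p :: 'a
    have "measure M {\<omega>\<in>space M. 2 \<le> card (Phi \<omega> \<inter> cell \<delta> p)} \<le> (lam * measure lborel (cell \<delta> p)) ^ 2"
      by (rule prob_homogeneous_PPP_two_points_le[OF PPP sets_cell bounded_cell[OF \<delta>]])
    also have "\<dots> \<le> (lam * \<delta> ^ DIM('a)) ^ 2"
      using measure_cell_le[OF \<delta>, of p] homogeneous_PPP_intensity_pos[OF PPP]
      by (intro power_mono mult_left_mono) auto
    finally show "measure M {\<omega>\<in>space M. 2 \<le> card (Phi \<omega> \<inter> cell \<delta> p)} \<le> (lam * \<delta> ^ DIM('a)) ^ 2" .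
  qed
  also have "\<dots> = card (grid_shell \<delta> 0 \<rho> :: 'a set) * \<delta> ^ DIM('a) * (lam ^ 2 * \<delta> ^ DIM('a))"
    by (simp add: power_mult_distrib power2_eq_square mult_ac)
  also have "\<dots> \<le> measure lborel (ball (0::'a) 1) * (\<rho> + DIM('a) * \<delta>) ^ DIM('a) * (lam ^ 2 * \<delta> ^ DIM('a))"
    using card_grid_ball_le[OF \<delta> \<rho>] \<delta> by (intro mult_right_mono) auto
  finally show ?thesis by (simp add: mult_ac)
qed

lemma sets_measure_chain_cover:
  fixes Phi :: "'w \<Rightarrow> 'a::euclidean_space set" and lam \<delta> h K \<rho> :: real
  assumes PPP: "homogeneous_PPP M lam Phi" and \<delta>: "\<delta> > 0" and "\<rho> \<ge> 0" "h \<ge> 0" "K \<ge> 0"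
  shows "chain_cover M Phi \<delta> h K k H \<rho> \<in> sets M"
    and "measure M (chain_cover M Phi \<delta> h K k H \<rho>) \<le>
      measure lborel (ball (0::'a) 1) * (\<rho> + DIM('a) * \<delta>) ^ DIM('a) * lam ^ 2 * \<delta> ^ DIM('a) +
      (\<Sum>l\<in>antitone_levels k H. card (grid_paths \<delta> h K k l :: (nat \<Rightarrow> 'a) set) * (lam * \<delta> ^ DIM('a)) ^ (2 * k + 1))"
proof -
  define Z where "Z l = {z \<in> (grid_paths \<delta> h K k l :: (nat \<Rightarrow> 'a) set). inj_on z {..2 * k}}" for l
  define U where "U l = (\<Union>z\<in>Z l. path_event M Phi \<delta> k z)" for l
  have Z: "finite (Z l)" "card (Z l) \<le> card (grid_paths \<delta> h K k l :: (nat \<Rightarrow> 'a) set)" for l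
  proof -
    have "Z l \<subseteq> grid_paths \<delta> h K k l" "finite (grid_paths \<delta> h K k l :: (nat \<Rightarrow> 'a) set)"
      unfolding Z_def using finite_card_grid_paths(1)[OF \<delta> assms(4,5)] by auto
    then show "finite (Z l)" "card (Z l) \<le> card (grid_paths \<delta> h K k l :: (nat \<Rightarrow> 'a) set)"
      by (auto intro: finite_subset card_mono)
  qed
  have U: "U l \<in> sets M" for l
    unfolding U_def using Z sets_path_event[OF PPP \<delta>] by (intro sets.finite_UN) auto
  have cover: "chain_cover M Phi \<delta> h K k H \<rho> = crowded_event M Phi \<delta> \<rho> \<union> (\<Union>l\<in>antitone_levels k H. U l)"
    unfolding chain_cover_def U_def Z_def ..
  have Us: "(\<Union>l\<in>antitone_levels k H. U l) \<in> sets M"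
    using finite_antitone_levels U by (intro sets.finite_UN) auto
  then show "chain_cover M Phi \<delta> h K k H \<rho> \<in> sets M"
    unfolding cover using sets_crowded_event[OF PPP \<delta> assms(3)] by blast
  have "measure M (U l) \<le> card (grid_paths \<delta> h K k l :: (nat \<Rightarrow> 'a) set) * (lam * \<delta> ^ DIM('a)) ^ (2 * k + 1)" for l
  proof -
    have "measure M (U l) \<le> (\<Sum>z\<in>Z l. measure M (path_event M Phi \<delta> k z))"
      unfolding U_def using Z sets_path_event[OF PPP \<delta>] by (intro measure_UNION_le) auto
    also have "\<dots> \<le> (\<Sum>z\<in>Z l. (lam * \<delta> ^ DIM('a)) ^ (2 * k + 1))"
      by (intro sum_mono measure_path_event_le[OF PPP \<delta>]) (simp add: Z_def)
    also have "\<dots> \<le> card (grid_paths \<delta> h K k l :: (nat \<Rightarrow> 'a) set) * (lam * \<delta> ^ DIM('a)) ^ (2 * k + 1)"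
      using Z(2)[of l] homogeneous_PPP_intensity_pos[OF PPP] \<delta> by (simp add: mult_right_mono)
    finally show ?thesis .
  qed
  then have "measure M (\<Union>l\<in>antitone_levels k H. U l) \<le>
      (\<Sum>l\<in>antitone_levels k H. card (grid_paths \<delta> h K k l :: (nat \<Rightarrow> 'a) set) * (lam * \<delta> ^ DIM('a)) ^ (2 * k + 1))"
    using finite_antitone_levels U by (intro order.trans[OF measure_UNION_le sum_mono]) auto
  then show "measure M (chain_cover M Phi \<delta> h K k H \<rho>) \<le>
      measure lborel (ball (0::'a) 1) * (\<rho> + DIM('a) * \<delta>) ^ DIM('a) * lam ^ 2 * \<delta> ^ DIM('a) +
      (\<Sum>l\<in>antitone_levels k H. card (grid_paths \<delta> h K k l :: (nat \<Rightarrow> 'a) set) * (lam * \<delta> ^ DIM('a)) ^ (2 * k + 1))"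
    unfolding cover
    using measure_Un_le[OF sets_crowded_event[OF PPP \<delta> assms(3)] Us] measure_crowded_event_le[OF PPP \<delta> assms(3)]
    by linarith
qed

lemma measure_chain_cover_le:
  fixes Phi :: "'w \<Rightarrow> 'a::euclidean_space set" and lam \<delta> h R K \<rho> :: real and H k :: nat
  assumes PPP: "homogeneous_PPP M lam Phi" and \<delta>: "\<delta> > 0" and R: "R > 0"
    and H: "H \<ge> 1" "k \<le> H" "h = R / H" and K: "K \<ge> 0"
    and small: "6 * DIM('a) * \<delta> \<le> h" "2 * DIM('a) * \<delta> \<le> 1"
    and \<rho>: "\<rho> = K + 2 * k * R + DIM('a) * \<delta>"
  shows "measure M (chain_cover M Phi \<delta> h K k H \<rho>) \<le>
    measure lborel (ball (0::'a) 1) * (K + 2 * k * R + 1) ^ DIM('a) * lam ^ 2 * \<delta> ^ DIM('a) +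
    lam * measure lborel (ball (0::'a) 1) * (K + 1) ^ DIM('a) *
    (2 * (lam ^ 2 * (4 * measure lborel (ball (0::'a) 1) ^ 2 * DIM('a) * (3 * R) ^ (2 * DIM('a))))) ^ k / fact k"
proof -
  define n where "n = DIM('a)"
  define \<kappa> where "\<kappa> = measure lborel (ball (0::'a) 1)"
  define X where "X = lam ^ 2 * (4 * \<kappa> ^ 2 * n * (3 * R) ^ (2 * n))"
  define A where "A = lam * \<kappa> * (K + 1) ^ n"
  have lam: "lam > 0" by (rule homogeneous_PPP_intensity_pos[OF PPP])
  have h: "h \<ge> 0" using R H by simp
  have "0 \<le> real n * \<delta>" using \<delta> by simp
  then have \<rho>0: "\<rho> \<ge> 0" using \<rho> K R by (simp add: n_def)
  have X: "X \<ge> 0" and A: "A \<ge> 0" using lam K R by (simp_all add: X_def A_def \<kappa>_def)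
  have "\<rho> + n * \<delta> \<le> K + 2 * k * R + 1" using \<rho> small(2) by (simp add: n_def mult_ac)
  then have crowded: "\<kappa> * (\<rho> + n * \<delta>) ^ n * lam ^ 2 * \<delta> ^ n \<le> \<kappa> * (K + 2 * k * R + 1) ^ n * lam ^ 2 * \<delta> ^ n"
    using \<rho>0 \<delta> by (intro mult_right_mono mult_left_mono power_mono) (auto simp: \<kappa>_def)
  have "(\<Sum>l\<in>antitone_levels k H. card (grid_paths \<delta> h K k l :: (nat \<Rightarrow> 'a) set) * (lam * \<delta> ^ n) ^ (2 * k + 1))
      \<le> card (antitone_levels k H) * (A * (X / H) ^ k)"
    using card_grid_paths_le[OF \<delta> R H(1,3) K lam small] unfolding A_def X_def \<kappa>_def n_def
    by (intro sum_bounded_above) (simp add: mult_ac)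
  also have "\<dots> \<le> real ((H + k) ^ k) / fact k * (A * (X / H) ^ k)"
    using A X by (intro mult_right_mono card_antitone_levels_le) auto
  also have "\<dots> = A * (real (H + k) / H * X) ^ k / fact k"
    by (simp add: power_mult_distrib power_divide mult_ac)
  also have "\<dots> \<le> A * (2 * X) ^ k / fact k"
  proof -
    have "real (H + k) / H \<le> 2" using H by (simp add: divide_le_eq)
    then have "real (H + k) / H * X \<le> 2 * X" using X by (rule mult_right_mono)
    then show ?thesis using A X by (intro divide_right_mono mult_left_mono power_mono) auto
  qed
  finally show ?thesis
    using sets_measure_chain_cover(2)[OF PPP \<delta> \<rho>0 h K, of k H] crowded
    unfolding A_def X_def \<kappa>_def n_def by linarith
qed

lemma ex_mult_power_div_fact_less:
  fixes A c \<epsilon> :: real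
  assumes "\<epsilon> > 0"
  shows "\<exists>k. A * c ^ k / fact k < \<epsilon>"
proof -
  have "(\<lambda>k. c ^ k / fact k) \<longlonglongrightarrow> 0"
    using summable_LIMSEQ_zero[OF summable_exp[of c]] by (simp add: field_simps)
  then have "(\<lambda>k. A * (c ^ k / fact k)) \<longlonglongrightarrow> 0" by (rule tendsto_mult_right_zero)
  then have "\<forall>\<^sub>F k in sequentially. A * (c ^ k / fact k) < \<epsilon>" using assms by (rule order_tendstoD(2))
  then show ?thesis by (auto simp: eventually_sequentially)
qed

lemma ex_small_mesh:
  fixes B \<epsilon> h :: real and n :: nat
  assumes "B \<ge> 0" "\<epsilon> > 0" "h > 0" "n \<ge> 1"
  shows "\<exists>\<delta>::real. \<delta> > 0 \<and> 6 * n * \<delta> \<le> h \<and> 2 * n * \<delta> \<le> 1 \<and> B * \<delta> ^ n \<le> \<epsilon>"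
proof -
  define \<delta> where "\<delta> = min (min (h / (6 * n)) (1 / (2 * n))) (min 1 (\<epsilon> / (B + 1)))"
  have le: "\<delta> \<le> h / (6 * n)" "\<delta> \<le> 1 / (2 * n)" "\<delta> \<le> 1" "\<delta> \<le> \<epsilon> / (B + 1)"
    by (simp_all add: \<delta>_def)
  then have \<delta>: "\<delta> > 0" "6 * n * \<delta> \<le> h" "2 * n * \<delta> \<le> 1"
    using assms by (simp_all add: \<delta>_def le_divide_eq mult.commute)
  have "\<delta> ^ n \<le> \<delta>" using power_decreasing[of 1 n \<delta>] \<delta>(1) le(3) assms(4) by simp
  then have "B * \<delta> ^ n \<le> B * (\<epsilon> / (B + 1))"
    using assms(1) le(4) by (intro mult_left_mono) auto
  also have "\<dots> \<le> \<epsilon>" using assms(1,2) by (simp add: field_simps)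
  finally show ?thesis using \<delta> by blast
qed

text \<open>First k is chosen so that the path term, of order c^k / k!, is small, then the mesh \<delta> so
  that the crowded-cell term, of order \<delta>^n, is small.\<close>

lemma exists_small_chain_cover:
  fixes Phi :: "'w \<Rightarrow> 'a::euclidean_space set" and K R \<epsilon> :: real
  assumes PPP: "homogeneous_PPP M lam Phi" and K: "K \<ge> 0" and R: "R > 0" and \<epsilon>: "\<epsilon> > 0"
  shows "\<exists>G\<in>sets M. measure M G \<le> \<epsilon> \<and>
    {\<omega>\<in>space M. \<exists>x. second_order_descending_chain (Phi \<omega>) x \<and> norm (x 0) \<le> K \<and> pair_jump x 0 \<le> R} \<subseteq> G"
proof -
  define n where "n = DIM('a)"
  define \<kappa> where "\<kappa> = measure lborel (ball (0::'a) 1)"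
  define c where "c = 2 * (lam ^ 2 * (4 * \<kappa> ^ 2 * n * (3 * R) ^ (2 * n)))"
  have \<epsilon>2: "\<epsilon> / 2 > 0" using \<epsilon> by simp
  obtain k where paths: "lam * \<kappa> * (K + 1) ^ n * c ^ k / fact k < \<epsilon> / 2"
    using ex_mult_power_div_fact_less[OF \<epsilon>2] by blast
  define H where "H = k + 1"
  define h where "h = R / H"
  define B where "B = \<kappa> * (K + 2 * k * R + 1) ^ n * lam ^ 2"
  have "B \<ge> 0" "h > 0" "n \<ge> 1" using K R by (simp_all add: B_def \<kappa>_def h_def H_def n_def DIM_positive Suc_leI)
  then obtain \<delta> :: real where \<delta>: "\<delta> > 0" "6 * n * \<delta> \<le> h" "2 * n * \<delta> \<le> 1" and crowded: "B * \<delta> ^ n \<le> \<epsilon> / 2"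
    using ex_small_mesh[OF _ \<epsilon>2] by blast
  define \<rho> where "\<rho> = K + 2 * k * R + DIM('a) * \<delta>"
  show ?thesis
  proof (intro bexI conjI)
    have "0 \<le> real DIM('a) * \<delta>" using \<delta> by simp
    then show "chain_cover M Phi \<delta> h K k H \<rho> \<in> sets M"
      using K R \<delta> \<open>h > 0\<close> by (intro sets_measure_chain_cover(1)[OF PPP]) (auto simp: \<rho>_def)
    have "measure M (chain_cover M Phi \<delta> h K k H \<rho>) \<le> B * \<delta> ^ n + lam * \<kappa> * (K + 1) ^ n * c ^ k / fact k"
      using measure_chain_cover_le[OF PPP \<delta>(1) R _ _ h_def K _ _ \<rho>_def] \<delta>
      by (simp add: B_def c_def \<kappa>_def n_def H_def mult_ac)
    then show "measure M (chain_cover M Phi \<delta> h K k H \<rho>) \<le> \<epsilon>" using paths crowded by linarith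
    show "{\<omega>\<in>space M. \<exists>x. second_order_descending_chain (Phi \<omega>) x \<and> norm (x 0) \<le> K \<and> pair_jump x 0 \<le> R}
        \<subseteq> chain_cover M Phi \<delta> h K k H \<rho>"
      using \<delta>(1) R by (auto simp: H_def h_def \<rho>_def intro: descending_chain_in_chain_cover[OF PPP])
  qed
qed

lemma (in finite_measure) AE_not_if_arbitrarily_small_cover:
  assumes "\<And>\<epsilon>. \<epsilon> > 0 \<Longrightarrow> \<exists>G\<in>sets M. measure M G \<le> \<epsilon> \<and> {x\<in>space M. P x} \<subseteq> G"
  shows "AE x in M. \<not> P x"
proof -
  obtain G where G: "\<And>m. G m \<in> sets M" "\<And>m. measure M (G m) \<le> 1 / Suc m" "\<And>m. {x\<in>space M. P x} \<subseteq> G m"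
    using assms[of "1 / Suc _"] by (metis of_nat_0_less_iff zero_less_Suc divide_pos_pos zero_less_one)
  have "(\<Inter>m. G m) \<in> sets M" using G(1) by auto
  moreover have "measure M (\<Inter>m. G m) \<le> 0"
  proof (rule LIMSEQ_le_const[OF LIMSEQ_inverse_real_of_nat])
    have "measure M (\<Inter>m. G m) \<le> inverse (real (Suc m))" for m
    proof -
      have "measure M (\<Inter>m. G m) \<le> measure M (G m)" using G(1) by (intro finite_measure_mono) auto
      with G(2)[of m] show ?thesis by (simp add: inverse_eq_divide)
    qed
    then show "\<exists>N. \<forall>m\<ge>N. measure M (\<Inter>m. G m) \<le> inverse (real (Suc m))" by blast
  qed
  then have "emeasure M (\<Inter>m. G m) = 0"
    by (simp add: emeasure_eq_measure order.antisym)
  ultimately have "(\<Inter>m. G m) \<in> null_sets M" by blast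
  then show ?thesis using G(3) by (intro AE_I') auto
qed

lemma AE_no_bounded_descending_chain:
  fixes Phi :: "'w \<Rightarrow> 'a::euclidean_space set" and K R :: real
  assumes PPP: "homogeneous_PPP M lam Phi" and "K \<ge> 0" "R > 0"
  shows "AE \<omega> in M. \<not> (\<exists>x. second_order_descending_chain (Phi \<omega>) x \<and> norm (x 0) \<le> K \<and> pair_jump x 0 \<le> R)"
proof -
  interpret prob_space M by (rule homogeneous_PPP_prob_space[OF PPP])
  show ?thesis by (rule AE_not_if_arbitrarily_small_cover) (rule exists_small_chain_cover[OF assms])
qed

theorem mainTheorem9:
  fixes M :: "'w measure" and lam :: real and Phi :: "'w \<Rightarrow> 'a::euclidean_space set"
  assumes "homogeneous_PPP M lam Phi"
  shows "AE \<omega> in M. \<not> (\<exists>x. second_order_descending_chain (Phi \<omega>) x)"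
proof -
  have "AE \<omega> in M. \<forall>K R :: nat. \<not> (\<exists>x. second_order_descending_chain (Phi \<omega>) x \<and>
      norm (x 0) \<le> real K \<and> pair_jump x 0 \<le> real R + 1)"
    using AE_no_bounded_descending_chain[OF assms] by (simp add: AE_all_countable add_pos_nonneg)
  then show ?thesis
  proof (rule AE_mp[OF _ AE_I2], intro impI notI)
    fix \<omega> assume "\<forall>K R :: nat. \<not> (\<exists>x. second_order_descending_chain (Phi \<omega>) x \<and>
      norm (x 0) \<le> real K \<and> pair_jump x 0 \<le> real R + 1)"
    moreover assume "\<exists>x. second_order_descending_chain (Phi \<omega>) x"
    then obtain x where "second_order_descending_chain (Phi \<omega>) x" ..
    moreover have "norm (x 0) \<le> real (nat \<lceil>norm (x 0)\<rceil>)" "pair_jump x 0 \<le> real (nat \<lceil>pair_jump x 0\<rceil>) + 1"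
      by linarith+
    ultimately show False by blast
  qed
qed

end
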